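(* Let $M$ be an $\mathbf{FB}$-module and $\phi$ a symmetric operation on $M$. Then $\phi$ satisfies condition (B3) if and only if it satisfies (B3$'$): $\phi[n]=(-1)^{n+1}\phi[1]$ for all $n\ge1$.
   Context: $k$ is a commutative ring; $\mathbf{FB}$-modules are functors from finite sets and bijections to $k$-modules. A symmetric operation $\phi$ on $M$ assigns to each finite set $S$ and subsets $A,B\subseteq S$ a linear map $\phi^S_{A,B}:M(S\setminus B)\to M(S\setminus A)$, natural with respect to bijections. For $n\in\mathbb N$, $\phi[n]$ is the family defined for disjoint $A,B\subseteq S$ by $\phi[n]^S_{A,B}=\phi^{S\sqcup[n]}_{A\sqcup[n],B\sqcup[n]}$, where $[n]=\{1,\dots,n\}$ is taken disjoint from $S$. Condition (B3): for every finite set $S$ and subsets $A,B,C,D\subseteq S$ with $A\cap B=\emptyset$, $C\cap D=\emptyset$, $A\cap C\ne\emptyset$ and $B\cap D\ne\emptyset$, $\sum_{X\subseteq B\cap D}\phi^{S\setminus X}_{(D\setminus X)\cup C,\,A\cup(B\setminus X)}=\sum_{X\subseteq A\cap C}\phi^{S\setminus X}_{(C\setminus X)\cup D,\,B\cup(A\setminus X)}$. *)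

theory Defs
  imports Complex_Main
begin

definition lin_on :: "('k::comm_ring_1 \<Rightarrow> 'v::ab_group_add \<Rightarrow> 'v) \<Rightarrow> 'v set \<Rightarrow> 'v set \<Rightarrow> ('v \<Rightarrow> 'v) \<Rightarrow> bool" where
  "lin_on s V W f \<longleftrightarrow> (\<forall>x\<in>V. f x \<in> W) \<and> (\<forall>x\<in>V. \<forall>y\<in>V. f (x + y) = f x + f y)
     \<and> (\<forall>c. \<forall>x\<in>V. f (s c x) = s c (f x))"

text \<open>An FB-module: finite sets S of labels (type 'a) are sent to k-modules M S
  (submodules of an ambient k-module 'v); a bijection f : S -> T acts by act f S.\<close>
definition FB_module :: "('k::comm_ring_1 \<Rightarrow> 'v::ab_group_add \<Rightarrow> 'v) \<Rightarrow> ('a set \<Rightarrow> 'v set)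
    \<Rightarrow> (('a \<Rightarrow> 'a) \<Rightarrow> 'a set \<Rightarrow> 'v \<Rightarrow> 'v) \<Rightarrow> bool" where
  "FB_module s M act \<longleftrightarrow> module s
     \<and> (\<forall>S. finite S \<longrightarrow> module.subspace s (M S))
     \<and> (\<forall>f S T. finite S \<and> bij_betw f S T \<longrightarrow> lin_on s (M S) (M T) (act f S))
     \<and> (\<forall>S x. finite S \<and> x \<in> M S \<longrightarrow> act id S x = x)
     \<and> (\<forall>f g S T U x. finite S \<and> bij_betw f S T \<and> bij_betw g T U \<and> x \<in> M S
            \<longrightarrow> act (g \<circ> f) S x = act g T (act f S x))
     \<and> (\<forall>f g S x. finite S \<and> (\<forall>a\<in>S. f a = g a) \<and> x \<in> M S \<longrightarrow> act f S x = act g S x)"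

definition symmetric_operation :: "('k::comm_ring_1 \<Rightarrow> 'v::ab_group_add \<Rightarrow> 'v) \<Rightarrow> ('a set \<Rightarrow> 'v set)
    \<Rightarrow> (('a \<Rightarrow> 'a) \<Rightarrow> 'a set \<Rightarrow> 'v \<Rightarrow> 'v) \<Rightarrow> ('a set \<Rightarrow> 'a set \<Rightarrow> 'a set \<Rightarrow> 'v \<Rightarrow> 'v) \<Rightarrow> bool" where
  "symmetric_operation s M act phi \<longleftrightarrow>
     (\<forall>S A B. finite S \<and> A \<subseteq> S \<and> B \<subseteq> S \<longrightarrow> lin_on s (M (S - B)) (M (S - A)) (phi S A B))
   \<and> (\<forall>f S T A B x. finite S \<and> bij_betw f S T \<and> A \<subseteq> S \<and> B \<subseteq> S \<and> x \<in> M (S - B)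
        \<longrightarrow> act f (S - A) (phi S A B x) = phi T (f ` A) (f ` B) (act f (S - B) x))"

definition fresh_set :: "'a set \<Rightarrow> nat \<Rightarrow> 'a set" where
  "fresh_set S n = (SOME T. finite T \<and> card T = n \<and> S \<inter> T = {})"

definition phi_shift :: "('a set \<Rightarrow> 'a set \<Rightarrow> 'a set \<Rightarrow> 'v \<Rightarrow> 'v) \<Rightarrow> nat \<Rightarrow> 'a set \<Rightarrow> 'a set \<Rightarrow> 'a set \<Rightarrow> 'v \<Rightarrow> 'v" where
  "phi_shift phi n S A B = phi (S \<union> fresh_set S n) (A \<union> fresh_set S n) (B \<union> fresh_set S n)"

definition cond_B3 :: "('a set \<Rightarrow> 'v::ab_group_add set) \<Rightarrow> ('a set \<Rightarrow> 'a set \<Rightarrow> 'a set \<Rightarrow> 'v \<Rightarrow> 'v) \<Rightarrow> bool" where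
  "cond_B3 M phi \<longleftrightarrow>
    (\<forall>S A B C D. finite S \<and> A \<subseteq> S \<and> B \<subseteq> S \<and> C \<subseteq> S \<and> D \<subseteq> S \<and> A \<inter> B = {} \<and> C \<inter> D = {}
       \<and> A \<inter> C \<noteq> {} \<and> B \<inter> D \<noteq> {} \<longrightarrow>
       (\<forall>x \<in> M (S - (A \<union> B)).
          (\<Sum>X\<in>Pow (B \<inter> D). phi (S - X) ((D - X) \<union> C) (A \<union> (B - X)) x)
        = (\<Sum>X\<in>Pow (A \<inter> C). phi (S - X) ((C - X) \<union> D) (B \<union> (A - X)) x)))"

definition cond_B3' :: "('k::comm_ring_1 \<Rightarrow> 'v::ab_group_add \<Rightarrow> 'v) \<Rightarrow> ('a set \<Rightarrow> 'v set)
    \<Rightarrow> ('a set \<Rightarrow> 'a set \<Rightarrow> 'a set \<Rightarrow> 'v \<Rightarrow> 'v) \<Rightarrow> bool" where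
  "cond_B3' s M phi \<longleftrightarrow>
    (\<forall>n\<ge>1. \<forall>S A B. finite S \<and> A \<subseteq> S \<and> B \<subseteq> S \<and> A \<inter> B = {} \<longrightarrow>
       (\<forall>x \<in> M (S - B). phi_shift phi n S A B x = s ((-1) ^ (n + 1)) (phi_shift phi 1 S A B x)))"

end

theory Submission
  imports Defs
begin

(* By naturality, phi^S_{U,V} depends only on the isomorphism type of (S, U, V), so the common
   part U \<inter> V can be traded for a fresh set of the same size: for X \<subseteq> U \<inter> V,
   phi^{S-X}_{U-X,V-X} = phi[|U \<inter> V| - |X|]^{S - U \<inter> V}_{U-V,V-U}.
   With U = C \<union> D, V = A \<union> B and I = U \<inter> V, every term of (B3) therefore has the form
   h (|I| - |X|) for the single sequence h m = phi[m]^{S-I}_{U-V,V-U}, and (B3) compares the sums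
   of h (|I| - |X|) over the subsets X of B \<inter> D and of A \<inter> C.
   If h (m + 1) = - h m for m \<ge> 1, both sums vanish: adding a chosen element of the one intersection
   to X flips the sign, and an element of the other intersection, which lies in I, keeps the index
   at least 1. Conversely, choosing |B \<inter> D| = 2, |A \<inter> C| = 1 and |I| = m + 2 turns (B3) into
   h (m+2) + 2 h (m+1) + h m = h (m+2) + h (m+1). Finally, h (m + 1) = - h m for all m \<ge> 1 is
   (B3') in the form h m = (-1)^(m+1) h 1. *)

lemma fresh_set_props:
  assumes "infinite (UNIV :: 'a set)" and "finite (S :: 'a set)"
  shows "finite (fresh_set S n)" and "card (fresh_set S n) = n" and "S \<inter> fresh_set S n = {}"
proof -
  have "\<exists>T. finite T \<and> card T = n \<and> S \<inter> T = {}"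
    using finite_arbitrarily_large_disj[OF assms] .
  then have "finite (fresh_set S n) \<and> card (fresh_set S n) = n \<and> S \<inter> fresh_set S n = {}"
    unfolding fresh_set_def by (rule someI_ex)
  then show "finite (fresh_set S n)" and "card (fresh_set S n) = n" and "S \<inter> fresh_set S n = {}"
    by auto
qed

lemma FB_module_module: "FB_module s M act \<Longrightarrow> module s"
  unfolding FB_module_def by (elim conjE) assumption

lemma FB_module_act_fixing:
  assumes "FB_module s M act" and "finite S" and "\<forall>a\<in>S. f a = a" and "x \<in> M S"
  shows "act f S x = x"
proof -
  have cong: "\<forall>f g S x. finite S \<and> (\<forall>a\<in>S. f a = g a) \<and> x \<in> M S \<longrightarrow> act f S x = act g S x"
    using assms(1) unfolding FB_module_def by (elim conjE) assumption
  have ident: "\<forall>S x. finite S \<and> x \<in> M S \<longrightarrow> act id S x = x"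
    using assms(1) unfolding FB_module_def by (elim conjE) assumption
  have "act f S x = act id S x"
    using cong assms(2-4) by simp
  also have "\<dots> = x"
    using ident assms(2,4) by simp
  finally show ?thesis .
qed

lemma symmetric_operation_mem:
  assumes "symmetric_operation s M act phi" and "finite S" and "A \<subseteq> S" and "B \<subseteq> S"
    and "x \<in> M (S - B)"
  shows "phi S A B x \<in> M (S - A)"
proof -
  have "lin_on s (M (S - B)) (M (S - A)) (phi S A B)"
    using assms(1-4) unfolding symmetric_operation_def by (elim conjE) blast
  then show ?thesis
    using assms(5) unfolding lin_on_def by blast
qed

lemma symmetric_operation_natural:
  assumes "symmetric_operation s M act phi" and "finite S" and "bij_betw f S T"
    and "A \<subseteq> S" and "B \<subseteq> S" and "x \<in> M (S - B)"
  shows "act f (S - A) (phi S A B x) = phi T (f ` A) (f ` B) (act f (S - B) x)"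
proof -
  have "\<forall>f S T A B x. finite S \<and> bij_betw f S T \<and> A \<subseteq> S \<and> B \<subseteq> S \<and> x \<in> M (S - B)
      \<longrightarrow> act f (S - A) (phi S A B x) = phi T (f ` A) (f ` B) (act f (S - B) x)"
    using assms(1) unfolding symmetric_operation_def by (elim conjE) assumption
  then show ?thesis
    using assms(2-6) by blast
qed

(* Naturality along the bijection that moves U \<inter> V onto F and fixes everything else; it acts
   trivially on M (T - U) and M (T - V). *)
lemma phi_relabel_common:
  assumes FB: "FB_module s M act" and SO: "symmetric_operation s M act phi"
    and T: "finite T" "U \<subseteq> T" "V \<subseteq> T"
    and F: "finite F" "card F = card (U \<inter> V)" "F \<inter> (T - U \<inter> V) = {}"
    and x: "x \<in> M (T - V)"
  shows "phi T U V x = phi (T - U \<inter> V \<union> F) (U - V \<union> F) (V - U \<union> F) x"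
proof -
  let ?I = "U \<inter> V"
  have "finite ?I" using T finite_subset by blast
  then obtain g where g: "bij_betw g ?I F" using F finite_same_card_bij by metis
  define f where "f a = (if a \<in> ?I then g a else a)" for a
  have "bij_betw f (T - ?I \<union> ?I) (T - ?I \<union> F)"
  proof (rule bij_betw_combine)
    show "bij_betw f (T - ?I) (T - ?I)"
      by (rule bij_betw_cong[THEN iffD2, of _ _ id]) (auto simp: f_def)
    show "bij_betw f ?I F"
      by (rule bij_betw_cong[THEN iffD2, OF _ g]) (auto simp: f_def)
  qed (use F in auto)
  moreover have "T - ?I \<union> ?I = T" using T by auto
  ultimately have f: "bij_betw f T (T - ?I \<union> F)" by simp
  have gI: "g ` ?I = F" using g bij_betw_imp_surj_on by blast
  have "f ` U = U - V \<union> F" and "f ` V = V - U \<union> F"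
    using gI by (force simp: f_def image_iff)+
  moreover have "act f (T - W) y = y" if "y \<in> M (T - W)" and "?I \<subseteq> W" for W y
    by (rule FB_module_act_fixing[OF FB _ _ that(1)]) (use T that(2) in \<open>auto simp: f_def\<close>)
  ultimately show ?thesis
    using symmetric_operation_natural[OF SO T(1) f T(2,3) x]
      symmetric_operation_mem[OF SO T x] x by simp
qed

lemma phi_diff_eq_phi_shift:
  assumes inf: "infinite (UNIV :: 'a set)"
    and FB: "FB_module s M act" and SO: "symmetric_operation s M act phi"
    and S: "finite (S :: 'a set)" "U \<subseteq> S" "V \<subseteq> S" and X: "X \<subseteq> U \<inter> V"
    and x: "x \<in> M (S - V)"
  shows "phi (S - X) (U - X) (V - X) x
       = phi_shift phi (card (U \<inter> V) - card X) (S - U \<inter> V) (U - V) (V - U) x"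
proof -
  define F where "F = fresh_set (S - U \<inter> V) (card (U \<inter> V) - card X)"
  have "finite (S - U \<inter> V)" using S by simp
  note F = fresh_set_props[OF inf this, of "card (U \<inter> V) - card X", folded F_def]
  have "finite (U \<inter> V)" using S finite_subset[of "U \<inter> V" S] by blast
  have "(U - X) \<inter> (V - X) = U \<inter> V - X" by auto
  then have card: "card ((U - X) \<inter> (V - X)) = card (U \<inter> V) - card X"
    using card_Diff_subset[OF finite_subset[OF X \<open>finite (U \<inter> V)\<close>] X] by simp
  have disj: "F \<inter> (S - X - (U - X) \<inter> (V - X)) = {}"
    using F(3) X by auto
  have "S - X - (V - X) = S - V" using X by auto
  then have "x \<in> M (S - X - (V - X))" using x by simp
  then have "phi (S - X) (U - X) (V - X) x
      = phi ((S - X) - (U - X) \<inter> (V - X) \<union> F) ((U - X) - (V - X) \<union> F) ((V - X) - (U - X) \<union> F) x"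
    using S F(1,2) card disj by (intro phi_relabel_common[OF FB SO]) auto
  also have "(S - X) - (U - X) \<inter> (V - X) = S - U \<inter> V" using X by auto
  also have "(U - X) - (V - X) = U - V" using X by auto
  also have "(V - X) - (U - X) = V - U" using X by auto
  finally show ?thesis unfolding phi_shift_def F_def .
qed

lemma cond_B3_sums_eq_shift_sums:
  assumes inf: "infinite (UNIV :: 'a set)"
    and FB: "FB_module s M act" and SO: "symmetric_operation s M act phi"
    and S: "finite (S :: 'a set)" "A \<subseteq> S" "B \<subseteq> S" "C \<subseteq> S" "D \<subseteq> S"
    and disj: "A \<inter> B = {}" "C \<inter> D = {}" and x: "x \<in> M (S - (A \<union> B))"
  shows "(\<Sum>X\<in>Pow (B \<inter> D). phi (S - X) ((D - X) \<union> C) (A \<union> (B - X)) x)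
      = (\<Sum>X\<in>Pow (B \<inter> D). phi_shift phi (card ((C \<union> D) \<inter> (A \<union> B)) - card X)
            (S - (C \<union> D) \<inter> (A \<union> B)) (C \<union> D - (A \<union> B)) (A \<union> B - (C \<union> D)) x)"
      (is "?L1 = ?R1")
    and "(\<Sum>X\<in>Pow (A \<inter> C). phi (S - X) ((C - X) \<union> D) (B \<union> (A - X)) x)
      = (\<Sum>X\<in>Pow (A \<inter> C). phi_shift phi (card ((C \<union> D) \<inter> (A \<union> B)) - card X)
            (S - (C \<union> D) \<inter> (A \<union> B)) (C \<union> D - (A \<union> B)) (A \<union> B - (C \<union> D)) x)"
      (is "?L2 = ?R2")
proof -
  have shift: "phi (S - X) (C \<union> D - X) (A \<union> B - X) x
      = phi_shift phi (card ((C \<union> D) \<inter> (A \<union> B)) - card X)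
          (S - (C \<union> D) \<inter> (A \<union> B)) (C \<union> D - (A \<union> B)) (A \<union> B - (C \<union> D)) x"
    if "X \<subseteq> (C \<union> D) \<inter> (A \<union> B)" for X
    by (rule phi_diff_eq_phi_shift[OF inf FB SO]) (use S x that in auto)
  show "?L1 = ?R1"
  proof (rule sum.cong)
    fix X assume "X \<in> Pow (B \<inter> D)"
    then have "(D - X) \<union> C = C \<union> D - X" "A \<union> (B - X) = A \<union> B - X"
      and "X \<subseteq> (C \<union> D) \<inter> (A \<union> B)" using disj by auto
    then show "phi (S - X) ((D - X) \<union> C) (A \<union> (B - X)) x
        = phi_shift phi (card ((C \<union> D) \<inter> (A \<union> B)) - card X)
            (S - (C \<union> D) \<inter> (A \<union> B)) (C \<union> D - (A \<union> B)) (A \<union> B - (C \<union> D)) x"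
      using shift by simp
  qed simp
  show "?L2 = ?R2"
  proof (rule sum.cong)
    fix X assume "X \<in> Pow (A \<inter> C)"
    then have "(C - X) \<union> D = C \<union> D - X" "B \<union> (A - X) = A \<union> B - X"
      and "X \<subseteq> (C \<union> D) \<inter> (A \<union> B)" using disj by auto
    then show "phi (S - X) ((C - X) \<union> D) (B \<union> (A - X)) x
        = phi_shift phi (card ((C \<union> D) \<inter> (A \<union> B)) - card X)
            (S - (C \<union> D) \<inter> (A \<union> B)) (C \<union> D - (A \<union> B)) (A \<union> B - (C \<union> D)) x"
      using shift by simp
  qed simp
qed

lemma sum_Pow_insert:
  assumes "finite A" and "a \<notin> A"
  shows "(\<Sum>X\<in>Pow (insert a A). f X) = (\<Sum>X\<in>Pow A. f X + f (insert a X))"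
proof -
  have "(\<Sum>X\<in>Pow (insert a A). f X) = (\<Sum>X\<in>Pow A. f X) + (\<Sum>X\<in>insert a ` Pow A. f X)"
    unfolding Pow_insert by (rule sum.union_disjoint) (use assms in auto)
  also have "(\<Sum>X\<in>insert a ` Pow A. f X) = (\<Sum>X\<in>Pow A. f (insert a X))"
    by (subst sum.reindex) (use assms in \<open>auto intro!: inj_onI simp: o_def\<close>)
  finally show ?thesis by (simp add: sum.distrib)
qed

lemma sum_Pow_card_diff_eq_0:
  fixes H :: "nat \<Rightarrow> 'v::ab_group_add"
  assumes alt: "\<And>k. k \<ge> 1 \<Longrightarrow> H (Suc k) = - H k"
    and I: "finite I" "P \<subseteq> I" and p: "p \<in> P" and a: "a \<in> I - P"
  shows "(\<Sum>X\<in>Pow P. H (card I - card X)) = 0"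
proof -
  define Q where "Q = P - {p}"
  have "finite P" using I finite_subset by blast
  then have Q: "finite Q" "p \<notin> Q" "P = insert p Q"
    using p unfolding Q_def by auto
  have "H (card I - card X) + H (card I - card (insert p X)) = 0" if "X \<subseteq> Q" for X
  proof -
    have X: "finite X" "p \<notin> X"
      using that Q finite_subset by blast+
    have sub: "insert a (insert p X) \<subseteq> I" and a: "a \<notin> insert p X"
      using that Q I p a by auto
    have "card (insert a (insert p X)) \<le> card I"
      using card_mono[OF I(1) sub] .
    moreover have "card (insert a (insert p X)) = card X + 2"
      using X a by simp
    ultimately have "card X + 2 \<le> card I" by simp
    then have "card I - card X = Suc (card I - card (insert p X))"
      and "card I - card (insert p X) \<ge> 1"
      using X by auto
    then show ?thesis using alt by simp
  qed
  then show ?thesis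
    unfolding Q(3) sum_Pow_insert[OF Q(1,2)] by (intro sum.neutral) blast
qed

definition shifts_alternate :: "('a set \<Rightarrow> 'v::ab_group_add set)
    \<Rightarrow> ('a set \<Rightarrow> 'a set \<Rightarrow> 'a set \<Rightarrow> 'v \<Rightarrow> 'v) \<Rightarrow> bool" where
  "shifts_alternate M phi \<longleftrightarrow>
    (\<forall>n\<ge>1. \<forall>S A B. finite S \<and> A \<subseteq> S \<and> B \<subseteq> S \<and> A \<inter> B = {} \<longrightarrow>
       (\<forall>x \<in> M (S - B). phi_shift phi (Suc n) S A B x = - phi_shift phi n S A B x))"

lemma module_sign_scaled_iff_alternating:
  fixes s :: "'k::comm_ring_1 \<Rightarrow> 'v::ab_group_add \<Rightarrow> 'v" and h :: "nat \<Rightarrow> 'v"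
  assumes "module s"
  shows "(\<forall>n\<ge>1. h n = s ((-1) ^ (n + 1)) (h 1)) \<longleftrightarrow> (\<forall>n\<ge>1. h (Suc n) = - h n)"
proof
  assume h: "\<forall>n\<ge>1. h n = s ((-1) ^ (n + 1)) (h 1)"
  show "\<forall>n\<ge>1. h (Suc n) = - h n"
  proof (intro allI impI)
    fix n :: nat assume "n \<ge> 1"
    then have "h (Suc n) = s (- ((-1) ^ (n + 1))) (h 1)" and "h n = s ((-1) ^ (n + 1)) (h 1)"
      using h[rule_format, of "Suc n"] h[rule_format, of n] by simp_all
    then show "h (Suc n) = - h n"
      by (simp add: module.scale_minus_left[OF assms])
  qed
next
  assume alt: "\<forall>n\<ge>1. h (Suc n) = - h n"
  show "\<forall>n\<ge>1. h n = s ((-1) ^ (n + 1)) (h 1)"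
  proof (intro allI impI)
    fix n :: nat assume "n \<ge> 1"
    then show "h n = s ((-1) ^ (n + 1)) (h 1)"
    proof (induction n rule: nat_induct_at_least)
      case base
      then show ?case using module.scale_one[OF assms] by simp
    next
      case (Suc n)
      then show ?case using alt module.scale_minus_left[OF assms] by simp
    qed
  qed
qed

lemma cond_B3'_iff_shifts_alternate:
  assumes "module s"
  shows "cond_B3' s M phi \<longleftrightarrow> shifts_alternate M phi"
proof -
  let ?adm = "\<lambda>S A B. finite S \<and> A \<subseteq> S \<and> B \<subseteq> S \<and> A \<inter> B = {}"
  have alt: "(\<forall>n\<ge>1. phi_shift phi n S A B x = s ((-1) ^ (n + 1)) (phi_shift phi 1 S A B x))
      \<longleftrightarrow> (\<forall>n\<ge>1. phi_shift phi (Suc n) S A B x = - phi_shift phi n S A B x)" for S A B x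
    using module_sign_scaled_iff_alternating[OF assms, of "\<lambda>n. phi_shift phi n S A B x"] .
  have "cond_B3' s M phi \<longleftrightarrow> (\<forall>S A B. ?adm S A B \<longrightarrow> (\<forall>x\<in>M (S - B).
      \<forall>n\<ge>1. phi_shift phi n S A B x = s ((-1) ^ (n + 1)) (phi_shift phi 1 S A B x)))"
    unfolding cond_B3'_def by blast
  also have "\<dots> \<longleftrightarrow> shifts_alternate M phi"
    unfolding alt shifts_alternate_def by blast
  finally show ?thesis .
qed

lemma shifts_alternate_imp_cond_B3:
  assumes inf: "infinite (UNIV :: 'a set)"
    and FB: "FB_module s M act" and SO: "symmetric_operation s M act phi"
    and alt: "shifts_alternate M (phi :: 'a set \<Rightarrow> 'a set \<Rightarrow> 'a set \<Rightarrow> 'v::ab_group_add \<Rightarrow> 'v)"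
  shows "cond_B3 M phi"
  unfolding cond_B3_def
proof (intro allI impI ballI)
  fix S A B C D :: "'a set" and x
  assume "finite S \<and> A \<subseteq> S \<and> B \<subseteq> S \<and> C \<subseteq> S \<and> D \<subseteq> S \<and> A \<inter> B = {} \<and> C \<inter> D = {}
      \<and> A \<inter> C \<noteq> {} \<and> B \<inter> D \<noteq> {}"
  then have S: "finite S" "A \<subseteq> S" "B \<subseteq> S" "C \<subseteq> S" "D \<subseteq> S"
    and disj: "A \<inter> B = {}" "C \<inter> D = {}" and "A \<inter> C \<noteq> {}" "B \<inter> D \<noteq> {}"
    by auto
  then obtain a p where a: "a \<in> A \<inter> C" and p: "p \<in> B \<inter> D" by blast
  assume x: "x \<in> M (S - (A \<union> B))"
  define I where "I = (C \<union> D) \<inter> (A \<union> B)"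
  define h where "h n = phi_shift phi n (S - I) (C \<union> D - (A \<union> B)) (A \<union> B - (C \<union> D)) x" for n
  have adm: "finite (S - I) \<and> C \<union> D - (A \<union> B) \<subseteq> S - I \<and> A \<union> B - (C \<union> D) \<subseteq> S - I
      \<and> (C \<union> D - (A \<union> B)) \<inter> (A \<union> B - (C \<union> D)) = {}"
    using S unfolding I_def by auto
  have "S - I - (A \<union> B - (C \<union> D)) = S - (A \<union> B)" unfolding I_def by auto
  then have x': "x \<in> M (S - I - (A \<union> B - (C \<union> D)))" using x by simp
  have h_alt: "h (Suc n) = - h n" if "n \<ge> 1" for n
    using alt[unfolded shifts_alternate_def, rule_format, OF that adm x'] unfolding h_def .
  have I: "finite I" "B \<inter> D \<subseteq> I" "A \<inter> C \<subseteq> I"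
    using S unfolding I_def by (auto intro: finite_subset[of _ S])
  have "(\<Sum>X\<in>Pow (B \<inter> D). h (card I - card X)) = 0"
    by (rule sum_Pow_card_diff_eq_0[where H = h, OF h_alt I(1,2) p]) (use a disj in \<open>auto simp: I_def\<close>)
  moreover have "(\<Sum>X\<in>Pow (A \<inter> C). h (card I - card X)) = 0"
    by (rule sum_Pow_card_diff_eq_0[where H = h, OF h_alt I(1,3) a]) (use p disj in \<open>auto simp: I_def\<close>)
  ultimately show "(\<Sum>X\<in>Pow (B \<inter> D). phi (S - X) ((D - X) \<union> C) (A \<union> (B - X)) x)
      = (\<Sum>X\<in>Pow (A \<inter> C). phi (S - X) ((C - X) \<union> D) (B \<union> (A - X)) x)"
    unfolding cond_B3_sums_eq_shift_sums[OF inf FB SO S disj x] h_def I_def by simp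
qed

lemma cond_B3_imp_shifts_alternate:
  assumes inf: "infinite (UNIV :: 'a set)"
    and FB: "FB_module s M act" and SO: "symmetric_operation s M act phi"
    and B3: "cond_B3 M (phi :: 'a set \<Rightarrow> 'a set \<Rightarrow> 'a set \<Rightarrow> 'v::ab_group_add \<Rightarrow> 'v)"
  shows "shifts_alternate M phi"
  unfolding shifts_alternate_def
proof (intro allI impI ballI)
  fix n :: nat and S U V :: "'a set" and x
  assume n: "n \<ge> 1" and "finite S \<and> U \<subseteq> S \<and> V \<subseteq> S \<and> U \<inter> V = {}" and x: "x \<in> M (S - V)"
  then have S: "finite S" "U \<subseteq> S" "V \<subseteq> S" "U \<inter> V = {}" by auto
  obtain p q q' where pq: "p \<notin> S" "q \<notin> S" "q' \<notin> S" "p \<noteq> q" "q \<noteq> q'" "p \<noteq> q'"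
  proof -
    obtain G where "finite G" "card G = 3" "G \<subseteq> UNIV - S"
      using infinite_arbitrarily_large[OF Diff_infinite_finite[OF S(1) inf], of 3] by blast
    then show ?thesis using that by (auto simp: card_3_iff)
  qed
  have "finite (S \<union> {p, q, q'})" using S(1) by simp
  then obtain E where E: "finite E" "card E = n - 1" "E \<subseteq> UNIV - (S \<union> {p, q, q'})"
    using infinite_arbitrarily_large[OF Diff_infinite_finite[OF _ inf], of "S \<union> {p, q, q'}" "n - 1"]
    by blast
  define I where "I = {p, q, q'} \<union> E"
  define A where "A = insert p (E \<union> V)"
  define B where "B = {q, q'}"
  define C where "C = insert p U"
  define D where "D = {q, q'} \<union> E"
  have SI: "finite (S \<union> I)" "A \<subseteq> S \<union> I" "B \<subseteq> S \<union> I" "C \<subseteq> S \<union> I" "D \<subseteq> S \<union> I"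
    using S E unfolding I_def A_def B_def C_def D_def by auto
  have disj: "A \<inter> B = {}" "C \<inter> D = {}"
    using S pq E unfolding A_def B_def C_def D_def by auto
  have sets: "(C \<union> D) \<inter> (A \<union> B) = I" "S \<union> I - I = S"
      "C \<union> D - (A \<union> B) = U" "A \<union> B - (C \<union> D) = V"
    and BD: "B \<inter> D = {q, q'}" and AC: "A \<inter> C = {p}"
    using S pq E unfolding I_def A_def B_def C_def D_def by auto
  have config: "finite (S \<union> I) \<and> A \<subseteq> S \<union> I \<and> B \<subseteq> S \<union> I \<and> C \<subseteq> S \<union> I \<and> D \<subseteq> S \<union> I
      \<and> A \<inter> B = {} \<and> C \<inter> D = {} \<and> A \<inter> C \<noteq> {} \<and> B \<inter> D \<noteq> {}"
    unfolding AC BD using SI disj by blast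
  have "S \<union> I - (A \<union> B) = S - V"
    using S pq E unfolding I_def A_def B_def by auto
  then have x': "x \<in> M (S \<union> I - (A \<union> B))" using x by simp
  have "card I = n + 2"
    using E pq n unfolding I_def by (subst card_Un_disjoint) auto
  define h where "h m = phi_shift phi m S U V x" for m
  have "(\<Sum>X\<in>Pow (B \<inter> D). h (card I - card X)) = (\<Sum>X\<in>Pow (A \<inter> C). h (card I - card X))"
    using B3[unfolded cond_B3_def, rule_format, OF config x']
    unfolding cond_B3_sums_eq_shift_sums[OF inf FB SO SI disj x'] sets h_def .
  then have "(\<Sum>X\<in>Pow {q, q'}. h (n + 2 - card X)) = (\<Sum>X\<in>Pow {p}. h (n + 2 - card X))"
    unfolding BD AC \<open>card I = n + 2\<close> .
  then have "h (n + 2) + h (Suc n) + (h (Suc n) + h n) = h (n + 2) + h (Suc n)"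
    using pq by (simp add: sum_Pow_insert)
  then show "phi_shift phi (Suc n) S U V x = - phi_shift phi n S U V x"
    unfolding h_def by (simp add: add.assoc eq_neg_iff_add_eq_0)
qed

theorem proposition7p5:
  fixes s :: "'k::comm_ring_1 \<Rightarrow> 'v::ab_group_add \<Rightarrow> 'v"
    and M :: "'a set \<Rightarrow> 'v set"
    and act :: "('a \<Rightarrow> 'a) \<Rightarrow> 'a set \<Rightarrow> 'v \<Rightarrow> 'v"
    and phi :: "'a set \<Rightarrow> 'a set \<Rightarrow> 'a set \<Rightarrow> 'v \<Rightarrow> 'v"
  assumes "infinite (UNIV :: 'a set)"
    and "FB_module s M act"
    and "symmetric_operation s M act phi"
  shows "cond_B3 M phi \<longleftrightarrow> cond_B3' s M phi"
  unfolding cond_B3'_iff_shifts_alternate[OF FB_module_module[OF assms(2)]]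
  using cond_B3_imp_shifts_alternate[OF assms] shifts_alternate_imp_cond_B3[OF assms] by blast

end
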